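(* Every proof of a formula $F$ in $\mathsf{PA}^\exists$ can be transformed into a proof of $F$ of the following form: there are proofs $\mathcal{D}_1,\dots,\mathcal{D}_n$ of $F$ that are purely intuitionistic (contain no application of the rule $\mathsf{EM}$, possibly with open assumptions), and the proof of $F$ is obtained from $\mathcal{D}_1,\dots,\mathcal{D}_n$ by repeated applications of the rule $\mathsf{EM}$ only, each with conclusion $F$.
   Context: $\mathsf{PA}^\exists$ is presented as a natural deduction system for arithmetic over $0,\mathsf{S},+,\cdot,=$ whose formulas are $\exists$-translations (so no universal quantifier occurs and no $\forall$-rules are used), where the $\exists$-translation is: $F^\exists=F$ for atomic $F$; commuting with $\wedge,\vee,\to,\exists$; $(\forall xF)^\exists=\neg\exists x\neg F^\exists$. Its rules are the intuitionistic natural deduction rules for $\wedge,\vee,\to,\exists,\bot$, the ($\exists$-translated) arithmetical axioms, the translated induction rule $\mathrm{Ind}^\exists$: from $\Gamma\vdash A(0)$ and $\Gamma\vdash\neg\exists\alpha\neg(A(\alpha)\to A(\mathsf{S}\alpha))$ infer $\Gamma\vdash\neg\exists\alpha\neg A(\alpha)$, and the classical rule $\mathsf{EM}$: for any formulas $A,C$, from $\Gamma,A\vdash C$ and $\Gamma,\neg A\vdash C$ infer $\Gamma\vdash C$ (discharging $A$ and $\neg A$). *)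

theory Defs
  imports Main
begin

datatype tm = Var nat | Zero | Succ tm | Plus tm tm | Times tm tm

text \<open>Formulas of PA-exists: no universal quantifier occurs.  Every such formula is
its own exists-translation, and every exists-translation is of this shape.
The binder FEx binds de Bruijn index 0.\<close>
datatype fm = FEq tm tm | FBot | FAnd fm fm | FOr fm fm | FImp fm fm | FEx fm

definition neg :: "fm \<Rightarrow> fm" where "neg A = FImp A FBot"

primrec tsub :: "(nat \<Rightarrow> tm) \<Rightarrow> tm \<Rightarrow> tm" where
  "tsub \<sigma> (Var n) = \<sigma> n"
| "tsub \<sigma> Zero = Zero"
| "tsub \<sigma> (Succ t) = Succ (tsub \<sigma> t)"
| "tsub \<sigma> (Plus s t) = Plus (tsub \<sigma> s) (tsub \<sigma> t)"
| "tsub \<sigma> (Times s t) = Times (tsub \<sigma> s) (tsub \<sigma> t)"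

definition tlift :: "tm \<Rightarrow> tm" where "tlift t = tsub (\<lambda>n. Var (Suc n)) t"

definition up :: "(nat \<Rightarrow> tm) \<Rightarrow> nat \<Rightarrow> tm" where
  "up \<sigma> n = (case n of 0 \<Rightarrow> Var 0 | Suc m \<Rightarrow> tlift (\<sigma> m))"

primrec fsub :: "(nat \<Rightarrow> tm) \<Rightarrow> fm \<Rightarrow> fm" where
  "fsub \<sigma> (FEq s t) = FEq (tsub \<sigma> s) (tsub \<sigma> t)"
| "fsub \<sigma> FBot = FBot"
| "fsub \<sigma> (FAnd A B) = FAnd (fsub \<sigma> A) (fsub \<sigma> B)"
| "fsub \<sigma> (FOr A B) = FOr (fsub \<sigma> A) (fsub \<sigma> B)"
| "fsub \<sigma> (FImp A B) = FImp (fsub \<sigma> A) (fsub \<sigma> B)"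
| "fsub \<sigma> (FEx A) = FEx (fsub (up \<sigma>) A)"

text \<open>Shift all free variables up by one (used for the eigenvariable of exists-elimination).\<close>
definition flift :: "fm \<Rightarrow> fm" where "flift A = fsub (\<lambda>n. Var (Suc n)) A"

text \<open>A(t): instantiate the variable bound by an outer FEx (index 0) with t.\<close>
definition inst :: "fm \<Rightarrow> tm \<Rightarrow> fm" where
  "inst A t = fsub (\<lambda>n. case n of 0 \<Rightarrow> t | Suc m \<Rightarrow> Var m) A"

text \<open>A(S alpha), keeping alpha (index 0) in place.\<close>
definition step_inst :: "fm \<Rightarrow> fm" where
  "step_inst A = fsub (\<lambda>n. if n = 0 then Succ (Var 0) else Var n) A"

inductive pa_axiom :: "fm \<Rightarrow> bool" where
  eq_refl: "pa_axiom (FEq t t)"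
| eq_subst: "pa_axiom (FImp (FEq s t) (FImp (inst A s) (inst A t)))"
| succ_nz: "pa_axiom (neg (FEq (Succ t) Zero))"
| succ_inj: "pa_axiom (FImp (FEq (Succ s) (Succ t)) (FEq s t))"
| plus_0: "pa_axiom (FEq (Plus t Zero) t)"
| plus_S: "pa_axiom (FEq (Plus s (Succ t)) (Succ (Plus s t)))"
| times_0: "pa_axiom (FEq (Times t Zero) Zero)"
| times_S: "pa_axiom (FEq (Times s (Succ t)) (Plus (Times s t) s))"

text \<open>nd em Gamma F: F is derivable from the open assumptions \<Gamma>;
the rule EM may only be used when em = True.  So nd True is PA-exists and
nd False its purely intuitionistic (EM-free) fragment.\<close>
inductive nd :: "bool \<Rightarrow> fm set \<Rightarrow> fm \<Rightarrow> bool" where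
  Assm: "A \<in> \<Gamma> \<Longrightarrow> nd e \<Gamma> A"
| Ax: "pa_axiom A \<Longrightarrow> nd e \<Gamma> A"
| AndI: "nd e \<Gamma> A \<Longrightarrow> nd e \<Gamma> B \<Longrightarrow> nd e \<Gamma> (FAnd A B)"
| AndE1: "nd e \<Gamma> (FAnd A B) \<Longrightarrow> nd e \<Gamma> A"
| AndE2: "nd e \<Gamma> (FAnd A B) \<Longrightarrow> nd e \<Gamma> B"
| OrI1: "nd e \<Gamma> A \<Longrightarrow> nd e \<Gamma> (FOr A B)"
| OrI2: "nd e \<Gamma> B \<Longrightarrow> nd e \<Gamma> (FOr A B)"
| OrE: "nd e \<Gamma> (FOr A B) \<Longrightarrow> nd e (insert A \<Gamma>) C \<Longrightarrow> nd e (insert B \<Gamma>) C \<Longrightarrow> nd e \<Gamma> C"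
| ImpI: "nd e (insert A \<Gamma>) B \<Longrightarrow> nd e \<Gamma> (FImp A B)"
| ImpE: "nd e \<Gamma> (FImp A B) \<Longrightarrow> nd e \<Gamma> A \<Longrightarrow> nd e \<Gamma> B"
| BotE: "nd e \<Gamma> FBot \<Longrightarrow> nd e \<Gamma> A"
| ExI: "nd e \<Gamma> (inst A t) \<Longrightarrow> nd e \<Gamma> (FEx A)"
| ExE: "nd e \<Gamma> (FEx A) \<Longrightarrow> nd e (insert A (flift ` \<Gamma>)) (flift C) \<Longrightarrow> nd e \<Gamma> C"
| Ind: "nd e \<Gamma> (inst A Zero) \<Longrightarrow> nd e \<Gamma> (neg (FEx (neg (FImp A (step_inst A)))))
        \<Longrightarrow> nd e \<Gamma> (neg (FEx (neg A)))"
| EM: "nd True (insert A \<Gamma>) C \<Longrightarrow> nd True (insert (neg A) \<Gamma>) C \<Longrightarrow> nd True \<Gamma> C"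

inductive em_tree :: "fm set \<Rightarrow> fm \<Rightarrow> bool" where
  Leaf: "nd False \<Gamma> F \<Longrightarrow> em_tree \<Gamma> F"
| Node: "em_tree (insert A \<Gamma>) F \<Longrightarrow> em_tree (insert (neg A) \<Gamma>) F \<Longrightarrow> em_tree \<Gamma> F"

end

theory Submission
  imports Defs
begin

text \<open>
  Every rule except EM and exists-elimination commutes with EM splits: its premises are
  EM-trees, and grafting them together leaves the rule to be applied in the leaves.  For
  exists-elimination, the subderivation of the conclusion may split on formulas L mentioning
  the eigenvariable x, which cannot be moved below the rule.  Instead, a split on L is replaced
  by a split on the closed formula \<open>\<exists>x (L \<and> A)\<close>, where A is the accumulated conjunction of the
  eigenvariable assumptions: if it holds, the positive branch applies; if it fails, then from
  \<open>\<exists>x A\<close> one intuitionistically obtains \<open>\<exists>x (\<not>L \<and> A)\<close> and the negative branch applies.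
\<close>

lemma tsub_tsub: "tsub \<sigma> (tsub \<tau> t) = tsub (\<lambda>n. tsub \<sigma> (\<tau> n)) t"
  by (induct t) auto

lemma tsub_up_up: "tsub (up \<sigma>) (up \<tau> n) = up (\<lambda>n. tsub \<sigma> (\<tau> n)) n"
  by (cases n) (simp_all add: up_def tlift_def tsub_tsub)

lemma fsub_fsub: "fsub \<sigma> (fsub \<tau> A) = fsub (\<lambda>n. tsub \<sigma> (\<tau> n)) A"
  by (induct A arbitrary: \<sigma> \<tau>) (simp_all add: tsub_tsub tsub_up_up)

lemma tsub_Var: "tsub Var t = t"
  by (induct t) auto

lemma up_Var: "up Var = Var"
  by (rule ext) (simp add: up_def tlift_def split: nat.split)

lemma fsub_Var: "fsub Var A = A"
  by (induct A) (simp_all add: tsub_Var up_Var)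

lemma inst_lifted_Var0: "inst (fsub (up (\<lambda>n. Var (Suc n))) A) (Var 0) = A"
proof -
  have "(\<lambda>n. tsub (\<lambda>n. case n of 0 \<Rightarrow> Var 0 | Suc m \<Rightarrow> Var m) (up (\<lambda>n. Var (Suc n)) n)) = Var"
    by (rule ext, case_tac n) (simp_all add: up_def tlift_def)
  then show ?thesis
    by (simp add: inst_def fsub_fsub fsub_Var)
qed

lemma nd_ExI_lifted:
  assumes "nd e \<Gamma> A"
  shows "nd e \<Gamma> (flift (FEx A))"
  unfolding flift_def fsub.simps
  by (rule nd.ExI[where t = "Var 0"]) (simp add: inst_lifted_Var0 assms)

lemma nd_mono: "nd e \<Gamma> F \<Longrightarrow> \<Gamma> \<subseteq> \<Delta> \<Longrightarrow> nd e \<Delta> F"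
proof (induct arbitrary: \<Delta> rule: nd.induct)
  case (OrE e \<Gamma> A B C)
  then show ?case by (meson insert_mono nd.OrE)
next
  case (ImpI e A \<Gamma> B)
  then show ?case by (meson insert_mono nd.ImpI)
next
  case (ExE e \<Gamma> A C)
  then show ?case by (meson image_mono insert_mono nd.ExE)
next
  case (EM A \<Gamma> C)
  then show ?case by (meson insert_mono nd.EM)
qed (auto intro: nd.intros)

lemma nd_insert_FAnd:
  assumes "nd e (insert A (insert B \<Gamma>)) F"
  shows "nd e (insert (FAnd B A) \<Gamma>) F"
proof -
  let ?\<Delta> = "insert (FAnd B A) \<Gamma>"
  have "nd e \<Gamma> (FImp B (FImp A F))"
    using assms by (intro nd.ImpI)
  then have curried: "nd e ?\<Delta> (FImp B (FImp A F))"
    by (rule nd_mono) auto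
  have conj: "nd e ?\<Delta> (FAnd B A)"
    by (rule nd.Assm) simp
  show ?thesis
    by (rule nd.ImpE[OF nd.ImpE[OF curried nd.AndE1[OF conj]] nd.AndE2[OF conj]])
qed

lemma nd_OrE_imps:
  assumes "nd e \<Gamma> (FOr A B)" and imps: "nd e \<Gamma> (FAnd (FImp A C) (FImp B C))"
  shows "nd e \<Gamma> C"
proof (rule nd.OrE[OF assms(1)])
  have "nd e (insert A \<Gamma>) (FAnd (FImp A C) (FImp B C))"
    by (rule nd_mono[OF imps]) auto
  then show "nd e (insert A \<Gamma>) C"
    by (rule nd.ImpE[OF nd.AndE1 nd.Assm]) simp
  have "nd e (insert B \<Gamma>) (FAnd (FImp A C) (FImp B C))"
    by (rule nd_mono[OF imps]) auto
  then show "nd e (insert B \<Gamma>) C"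
    by (rule nd.ImpE[OF nd.AndE2 nd.Assm]) simp
qed

lemma nd_Ex_conj_neg:
  assumes "neg (FEx (FAnd L A)) \<in> \<Gamma>" and "FEx A \<in> \<Gamma>"
  shows "nd e \<Gamma> (FEx (FAnd (neg L) A))"
proof (rule nd.ExE[OF nd.Assm[OF assms(2)]])
  let ?\<Delta> = "insert A (flift ` \<Gamma>)"
  have "nd e (insert L ?\<Delta>) (flift (FEx (FAnd L A)))"
    by (rule nd_ExI_lifted) (auto intro: nd.AndI nd.Assm)
  moreover have "nd e (insert L ?\<Delta>) (flift (neg (FEx (FAnd L A))))"
    by (rule nd.Assm) (use assms(1) in auto)
  ultimately have "nd e ?\<Delta> (neg L)"
    unfolding neg_def by (intro nd.ImpI) (simp add: flift_def nd.ImpE)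
  then show "nd e ?\<Delta> (flift (FEx (FAnd (neg L) A)))"
    by (intro nd_ExI_lifted nd.AndI) (auto intro: nd.Assm)
qed

lemma em_tree_mono: "em_tree \<Gamma> F \<Longrightarrow> \<Gamma> \<subseteq> \<Delta> \<Longrightarrow> em_tree \<Delta> F"
proof (induct arbitrary: \<Delta> rule: em_tree.induct)
  case (Leaf \<Gamma> F)
  then show ?case by (meson em_tree.Leaf nd_mono)
next
  case (Node A \<Gamma> F)
  then show ?case by (meson em_tree.Node insert_mono)
qed

lemma em_tree_bind:
  assumes "em_tree \<Gamma> A"
    and "\<And>\<Delta>. \<Gamma> \<subseteq> \<Delta> \<Longrightarrow> nd False \<Delta> A \<Longrightarrow> em_tree \<Delta> B"
  shows "em_tree \<Gamma> B"
  using assms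
proof (induct rule: em_tree.induct)
  case (Leaf \<Gamma> F)
  then show ?case by blast
next
  case (Node L \<Gamma> F)
  have "em_tree (insert L \<Gamma>) B" and "em_tree (insert (neg L) \<Gamma>) B"
    using Node by blast+
  then show ?case by (rule em_tree.Node)
qed

lemma em_tree_map:
  assumes "em_tree \<Gamma> A"
    and "\<And>\<Delta>. \<Gamma> \<subseteq> \<Delta> \<Longrightarrow> nd False \<Delta> A \<Longrightarrow> nd False \<Delta> B"
  shows "em_tree \<Gamma> B"
  using assms(1) by (rule em_tree_bind) (blast intro: em_tree.Leaf assms(2))

lemma em_tree_map2:
  assumes "em_tree \<Gamma> A" and B: "em_tree \<Gamma> B"
    and step: "\<And>\<Delta>. \<Gamma> \<subseteq> \<Delta> \<Longrightarrow> nd False \<Delta> A \<Longrightarrow> nd False \<Delta> B \<Longrightarrow> nd False \<Delta> C"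
  shows "em_tree \<Gamma> C"
proof (rule em_tree_bind[OF assms(1)])
  fix \<Delta> assume sub: "\<Gamma> \<subseteq> \<Delta>" and A: "nd False \<Delta> A"
  show "em_tree \<Delta> C"
    by (rule em_tree_map[OF em_tree_mono[OF B sub]]) (meson A sub step nd_mono order_trans)
qed

lemma em_tree_ImpI: "em_tree \<Delta> B \<Longrightarrow> \<Delta> \<subseteq> insert A \<Gamma> \<Longrightarrow> em_tree \<Gamma> (FImp A B)"
proof (induct arbitrary: \<Gamma> rule: em_tree.induct)
  case (Leaf \<Delta> F)
  then show ?case by (meson em_tree.Leaf nd.ImpI nd_mono)
next
  case (Node L \<Delta> F)
  have "em_tree (insert L \<Gamma>) (FImp A F)" and "em_tree (insert (neg L) \<Gamma>) (FImp A F)"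
    using Node by (metis insert_commute insert_mono)+
  then show ?case by (rule em_tree.Node)
qed

text \<open>
  Initially
  \<Delta> is the premise context \<open>insert A (flift ` \<Gamma>)\<close> of exists-elimination; each EM split
  on L above it adds L to \<Delta> and conjoins L to A.
\<close>
definition eigen_context :: "fm set \<Rightarrow> fm \<Rightarrow> fm set \<Rightarrow> bool" where
  "eigen_context \<Delta> A \<Gamma> \<longleftrightarrow>
    (\<forall>F \<Theta>. flift ` \<Gamma> \<subseteq> \<Theta> \<longrightarrow> nd False (\<Delta> \<union> \<Theta>) F \<longrightarrow> nd False (insert A \<Theta>) F)"

lemma eigen_contextD:
  "eigen_context \<Delta> A \<Gamma> \<Longrightarrow> flift ` \<Gamma> \<subseteq> \<Theta> \<Longrightarrow> nd False (\<Delta> \<union> \<Theta>) F \<Longrightarrow> nd False (insert A \<Theta>) F"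
  unfolding eigen_context_def by blast

lemma eigen_context_init: "eigen_context (insert A (flift ` \<Gamma>)) A \<Gamma>"
  unfolding eigen_context_def
proof (intro allI impI)
  fix F \<Theta> assume "flift ` \<Gamma> \<subseteq> \<Theta>" "nd False (insert A (flift ` \<Gamma>) \<union> \<Theta>) F"
  then show "nd False (insert A \<Theta>) F"
    by (elim nd_mono) auto
qed

lemma eigen_context_insert:
  assumes "eigen_context \<Delta> A \<Gamma>"
  shows "eigen_context (insert L \<Delta>) (FAnd L A) \<Gamma>"
  unfolding eigen_context_def
proof (intro allI impI)
  fix F \<Theta> assume sub: "flift ` \<Gamma> \<subseteq> \<Theta>" and "nd False (insert L \<Delta> \<union> \<Theta>) F"
  then have "nd False (\<Delta> \<union> insert L \<Theta>) F"
    by simp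
  with sub have "nd False (insert A (insert L \<Theta>)) F"
    by (blast intro: eigen_contextD[OF assms])
  then show "nd False (insert (FAnd L A) \<Theta>) F"
    by (rule nd_insert_FAnd)
qed

lemma em_tree_Ex_imp:
  "em_tree \<Delta> D \<Longrightarrow> eigen_context \<Delta> A \<Gamma> \<Longrightarrow> D = flift C \<Longrightarrow> em_tree \<Gamma> (FImp (FEx A) C)"
proof (induct arbitrary: A \<Gamma> C rule: em_tree.induct)
  case (Leaf \<Delta> F)
  let ?\<Gamma>' = "insert (FEx A) \<Gamma>"
  have "nd False (\<Delta> \<union> flift ` ?\<Gamma>') (flift C)"
    using Leaf(1,3) by (metis nd_mono sup_ge1)
  then have "nd False (insert A (flift ` ?\<Gamma>')) (flift C)"
    by (rule eigen_contextD[OF Leaf(2), rotated]) auto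
  then have "nd False ?\<Gamma>' C"
    by (rule nd.ExE[OF nd.Assm, rotated]) simp
  then show ?case
    by (intro em_tree.Leaf nd.ImpI)
next
  case (Node L \<Delta> F)
  let ?E = "FEx (FAnd L A)"
  have pos: "em_tree \<Gamma> (FImp ?E C)"
    by (rule Node(2)[OF eigen_context_insert[OF Node(5)] Node(6)])
  have neg: "em_tree \<Gamma> (FImp (FEx (FAnd (neg L) A)) C)"
    by (rule Node(4)[OF eigen_context_insert[OF Node(5)] Node(6)])
  have "em_tree (insert ?E \<Gamma>) (FImp (FEx A) C)"
  proof (rule em_tree_map[OF em_tree_mono[OF pos]])
    fix \<Theta> assume "insert ?E \<Gamma> \<subseteq> \<Theta>" "nd False \<Theta> (FImp ?E C)"
    then have "nd False \<Theta> C"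
      by (meson insert_subset nd.Assm nd.ImpE)
    then have "nd False (insert (FEx A) \<Theta>) C"
      by (rule nd_mono) auto
    then show "nd False \<Theta> (FImp (FEx A) C)"
      by (rule nd.ImpI)
  qed auto
  moreover have "em_tree (insert (neg ?E) \<Gamma>) (FImp (FEx A) C)"
  proof (rule em_tree_map[OF em_tree_mono[OF neg]])
    fix \<Theta> assume sub: "insert (neg ?E) \<Gamma> \<subseteq> \<Theta>"
      and imp: "nd False \<Theta> (FImp (FEx (FAnd (neg L) A)) C)"
    have "nd False (insert (FEx A) \<Theta>) (FImp (FEx (FAnd (neg L) A)) C)"
      using imp by (rule nd_mono) auto
    moreover have "nd False (insert (FEx A) \<Theta>) (FEx (FAnd (neg L) A))"
      using sub by (intro nd_Ex_conj_neg) auto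
    ultimately have "nd False (insert (FEx A) \<Theta>) C"
      by (rule nd.ImpE)
    then show "nd False \<Theta> (FImp (FEx A) C)"
      by (rule nd.ImpI)
  qed auto
  ultimately show ?case
    by (rule em_tree.Node)
qed

lemma nd_em_tree: "nd e \<Gamma> F \<Longrightarrow> em_tree \<Gamma> F"
proof (induct rule: nd.induct)
  case (Assm A \<Gamma> e)
  then show ?case by (intro em_tree.Leaf nd.Assm)
next
  case (Ax A e \<Gamma>)
  then show ?case by (intro em_tree.Leaf nd.Ax)
next
  case (AndI e \<Gamma> A B)
  show ?case by (rule em_tree_map2[OF AndI(2,4)]) (rule nd.AndI)
next
  case (AndE1 e \<Gamma> A B)
  show ?case by (rule em_tree_map[OF AndE1(2)]) (rule nd.AndE1)
next
  case (AndE2 e \<Gamma> A B)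
  show ?case by (rule em_tree_map[OF AndE2(2)]) (rule nd.AndE2)
next
  case (OrI1 e \<Gamma> A B)
  show ?case by (rule em_tree_map[OF OrI1(2)]) (rule nd.OrI1)
next
  case (OrI2 e \<Gamma> B A)
  show ?case by (rule em_tree_map[OF OrI2(2)]) (rule nd.OrI2)
next
  case (OrE e \<Gamma> A B C)
  have "em_tree \<Gamma> (FImp A C)" and "em_tree \<Gamma> (FImp B C)"
    using OrE(4,6) by (auto intro: em_tree_ImpI)
  then have "em_tree \<Gamma> (FAnd (FImp A C) (FImp B C))"
    by (rule em_tree_map2) (rule nd.AndI)
  with OrE(2) show ?case
    by (rule em_tree_map2) (rule nd_OrE_imps)
next
  case (ImpI e A \<Gamma> B)
  then show ?case by (auto intro: em_tree_ImpI)
next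
  case (ImpE e \<Gamma> A B)
  show ?case by (rule em_tree_map2[OF ImpE(2,4)]) (rule nd.ImpE)
next
  case (BotE e \<Gamma> A)
  show ?case by (rule em_tree_map[OF BotE(2)]) (rule nd.BotE)
next
  case (ExI e \<Gamma> A t)
  show ?case by (rule em_tree_map[OF ExI(2)]) (rule nd.ExI)
next
  case (ExE e \<Gamma> A C)
  have "em_tree \<Gamma> (FImp (FEx A) C)"
    using ExE(4) eigen_context_init by (rule em_tree_Ex_imp) simp
  with ExE(2) show ?case
    by (rule em_tree_map2) (rule nd.ImpE)
next
  case (Ind e \<Gamma> A)
  show ?case by (rule em_tree_map2[OF Ind(2,4)]) (rule nd.Ind)
next
  case (EM A \<Gamma> C)
  show ?case by (rule em_tree.Node[OF EM(2,4)])
qed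

theorem mainTheorem10:
  assumes "nd True \<Gamma> F"
  shows "em_tree \<Gamma> F"
  using assms by (rule nd_em_tree)

end
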